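(* For every $V>0$ and every $x=(x_1,x_2,x_3)\in\Omega_V$, at least one coordinate satisfies $|x_i|<1$.
   Context: $f(x,y,z)=(2xy-z,x,y)$ on $\mathbb{R}^3$; $I(x,y,z)=x^2+y^2+z^2-2xyz-1$; $S_V=\{I=V\}$; for $V>0$, $\Omega_V=\{p\in S_V:\{f^n(p)\}_{n\in\mathbb{Z}}\text{ is bounded}\}$. *)

theory Defs
  imports "HOL-Analysis.Analysis"
begin

type_synonym pt = "real \<times> real \<times> real"

definition fmap :: "pt \<Rightarrow> pt" where
  "fmap p = (case p of (x, y, z) \<Rightarrow> (2 * x * y - z, x, y))"

definition fmap_inv :: "pt \<Rightarrow> pt" where
  "fmap_inv p = (case p of (a, b, c) \<Rightarrow> (b, c, 2 * b * c - a))"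

definition fiter :: "int \<Rightarrow> pt \<Rightarrow> pt" where
  "fiter n = (if n \<ge> 0 then fmap ^^ nat n else fmap_inv ^^ nat (- n))"

definition Iinv :: "pt \<Rightarrow> real" where
  "Iinv p = (case p of (x, y, z) \<Rightarrow> x^2 + y^2 + z^2 - 2 * x * y * z - 1)"

definition S_level :: "real \<Rightarrow> pt set" where
  "S_level V = {p. Iinv p = V}"

definition Omega :: "real \<Rightarrow> pt set" where
  "Omega V = {p \<in> S_level V. bounded (range (\<lambda>n::int. fiter n p))}"

end

theory Submission
  imports Defs
begin

text \<open>
  Call a point (x, y, z) escaping if |x| \<ge> 1, |y| \<ge> 1 and
  xyz \<le> (xy)^2.  The image (w, x, y) = f(x, y, z) of an escaping point is again
  escaping, and with A = |x|, B = |y|, u = AB - xyz/(AB) \<ge> 0 one has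
  |w| = AB + u and u^2 = I + (A^2 - 1)(B^2 - 1) \<ge> I.  Hence the first
  coordinate grows by at least sqrt I in every step, and since I is invariant,
  the forward orbit of an escaping point on a level set with I > 0 is unbounded.
  The inverse map is conjugate to f by the reversal (a, b, c) \<mapsto> (c, b, a), which
  also preserves I.  Finally, if all three coordinates of p have absolute value
  at least 1, then p or its reversal is escaping; so either the forward or the
  backward orbit of p is unbounded, and p cannot lie in Omega V.
\<close>

definition escaping :: "pt \<Rightarrow> bool" where
  "escaping p =
    (case p of (x, y, z) \<Rightarrow> 1 \<le> \<bar>x\<bar> \<and> 1 \<le> \<bar>y\<bar> \<and> x * y * z \<le> (x * y)^2)"

definition rev3 :: "pt \<Rightarrow> pt" where
  "rev3 p = (case p of (a, b, c) \<Rightarrow> (c, b, a))"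

lemma Iinv_fmap: "Iinv (fmap p) = Iinv p"
  by (cases p) (simp add: Iinv_def fmap_def power2_eq_square algebra_simps)

lemma Iinv_funpow: "Iinv ((fmap ^^ n) p) = Iinv p"
  by (induction n) (simp_all add: Iinv_fmap)

lemma Iinv_rev3: "Iinv (rev3 p) = Iinv p"
  by (cases p) (simp add: Iinv_def rev3_def algebra_simps)

lemma fmap_inv_rev3: "fmap_inv p = rev3 (fmap (rev3 p))"
  by (cases p) (simp add: fmap_inv_def fmap_def rev3_def algebra_simps)

lemma rev3_rev3 [simp]: "rev3 (rev3 p) = p"
  by (cases p) (simp add: rev3_def)

lemma fmap_inv_funpow: "(fmap_inv ^^ n) p = rev3 ((fmap ^^ n) (rev3 p))"
  by (induction n) (simp_all add: fmap_inv_rev3)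

lemma fiter_neg: "fiter (- int n) p = rev3 ((fmap ^^ n) (rev3 p))"
  by (cases "n = 0") (simp_all add: fiter_def fmap_inv_funpow)

lemma escaping_excess:
  fixes x y z :: real
  assumes "escaping (x, y, z)"
  shows "\<bar>x * y\<bar> \<le> \<bar>2 * x * y - z\<bar>"
    and "(\<bar>2 * x * y - z\<bar> - \<bar>x * y\<bar>)^2 = Iinv (x, y, z) + (x^2 - 1) * (y^2 - 1)"
proof -
  have x1: "1 \<le> \<bar>x\<bar>" and y1: "1 \<le> \<bar>y\<bar>" and s_le: "x * y * z \<le> (x * y)^2"
    using assms by (auto simp: escaping_def)
  define m where "m = \<bar>x * y\<bar>"
  define u where "u = ((x * y)^2 - x * y * z) / m"
  have m1: "1 \<le> m" using mult_mono[OF x1 y1] by (simp add: m_def abs_mult)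
  have u0: "0 \<le> u" using s_le m1 by (simp add: u_def)
  have mu: "m * u = (x * y)^2 - x * y * z" using m1 by (simp add: u_def)
  have m_sq: "m^2 = (x * y)^2" by (simp add: m_def)
  have "(2 * x * y - z) * (x * y) = m * (m + u)"
    using mu m_sq by (simp add: algebra_simps power2_eq_square)
  then have "\<bar>2 * x * y - z\<bar> * m = m * (m + u)"
    using u0 m1 by (simp add: m_def abs_mult[symmetric])
  then have w_eq: "\<bar>2 * x * y - z\<bar> = m + u" using m1 by (simp add: mult.commute)
  then show "\<bar>x * y\<bar> \<le> \<bar>2 * x * y - z\<bar>" using u0 by (simp add: m_def)
  have "m^2 * u^2 = ((x * y)^2 - x * y * z)^2" by (simp add: mu power_mult_distrib[symmetric])
  also have "\<dots> = (x * y)^2 * ((x * y)^2 - 2 * (x * y * z) + z^2)"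
    by (simp add: power2_eq_square algebra_simps)
  finally have "m^2 * u^2 = m^2 * ((x * y)^2 - 2 * (x * y * z) + z^2)" by (simp only: m_sq)
  then have "u^2 = (x * y)^2 - 2 * (x * y * z) + z^2" using m1 by simp
  moreover have "\<bar>2 * x * y - z\<bar> - \<bar>x * y\<bar> = u" using w_eq by (simp add: m_def)
  ultimately show "(\<bar>2 * x * y - z\<bar> - \<bar>x * y\<bar>)^2 = Iinv (x, y, z) + (x^2 - 1) * (y^2 - 1)"
    by (simp add: Iinv_def power2_eq_square algebra_simps)
qed

lemma escaping_growth:
  assumes "escaping p"
  shows "\<bar>fst p\<bar> + sqrt (Iinv p) \<le> \<bar>fst (fmap p)\<bar>"
proof -
  obtain x y z where p: "p = (x, y, z)" by (cases p)
  have x1: "1 \<le> \<bar>x\<bar>" and y1: "1 \<le> \<bar>y\<bar>" using assms by (auto simp: escaping_def p)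
  note excess = escaping_excess[OF assms[unfolded p]]
  have "1 \<le> x^2" "1 \<le> y^2" using one_le_power[OF x1, of 2] one_le_power[OF y1, of 2] by simp_all
  then have "Iinv p \<le> (\<bar>2 * x * y - z\<bar> - \<bar>x * y\<bar>)^2" using excess(2) by (simp add: p)
  then have "sqrt (Iinv p) \<le> \<bar>2 * x * y - z\<bar> - \<bar>x * y\<bar>"
    using excess(1) real_sqrt_le_mono by fastforce
  moreover have "\<bar>x\<bar> \<le> \<bar>x * y\<bar>" using x1 y1 by (simp add: abs_mult mult_le_cancel_left1)
  ultimately show ?thesis by (simp add: p fmap_def)
qed

lemma escaping_fmap:
  assumes "escaping p"
  shows "escaping (fmap p)"
proof -
  obtain x y z where p: "p = (x, y, z)" by (cases p)
  define w where "w = 2 * x * y - z"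
  have x1: "1 \<le> \<bar>x\<bar>" and y1: "1 \<le> \<bar>y\<bar>" using assms by (auto simp: escaping_def p)
  have xy1: "1 \<le> \<bar>x * y\<bar>" using mult_mono[OF x1 y1] by (simp add: abs_mult)
  have xy_w: "\<bar>x * y\<bar> \<le> \<bar>w\<bar>"
    using escaping_excess(1)[OF assms[unfolded p]] by (simp add: w_def)
  have "1 \<le> x^2" using one_le_power[OF x1, of 2] by simp
  have "w * x * y \<le> \<bar>w\<bar> * \<bar>x * y\<bar>" by (metis abs_ge_self abs_mult mult.assoc)
  also have "\<dots> \<le> \<bar>w\<bar> * (\<bar>w\<bar> * x^2)"
    using mult_mono[OF xy_w \<open>1 \<le> x^2\<close>] by (intro mult_left_mono) simp_all
  also have "\<dots> = (w * x)^2" by (simp add: power_mult_distrib power2_eq_square)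
  finally show ?thesis using xy1 xy_w x1 by (simp add: escaping_def p fmap_def w_def[symmetric])
qed

lemma escaping_funpow:
  assumes "escaping p"
  shows "escaping ((fmap ^^ n) p) \<and> \<bar>fst p\<bar> + real n * sqrt (Iinv p) \<le> \<bar>fst ((fmap ^^ n) p)\<bar>"
proof (induction n)
  case 0
  show ?case using assms by simp
next
  case (Suc n)
  then have "escaping ((fmap ^^ n) p)" by blast
  with escaping_fmap escaping_growth Suc show ?case
    by (fastforce simp: Iinv_funpow algebra_simps)
qed

lemma escaping_unbounded:
  assumes "escaping p" and "Iinv p > 0"
  shows "\<not> bounded (range (\<lambda>n. fst ((fmap ^^ n) p)))"
proof
  assume "bounded (range (\<lambda>n. fst ((fmap ^^ n) p)))"
  then obtain B where B: "\<And>n. \<bar>fst ((fmap ^^ n) p)\<bar> \<le> B" by (auto simp: bounded_iff)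
  obtain n where n: "B < real n * sqrt (Iinv p)"
    using reals_Archimedean3[of "sqrt (Iinv p)"] assms(2) by auto
  have "real n * sqrt (Iinv p) \<le> \<bar>fst ((fmap ^^ n) p)\<bar>"
    using escaping_funpow[OF assms(1), of n] by linarith
  with B[of n] n show False by linarith
qed

text \<open>A point whose coordinates all have absolute value at least 1 is escaping
  itself or after reversal: failing both would force |z| > |x| and |x| > |z|.\<close>

lemma escaping_or_rev3:
  fixes x y z :: real
  assumes "1 \<le> \<bar>x\<bar>" "1 \<le> \<bar>y\<bar>" "1 \<le> \<bar>z\<bar>"
  shows "escaping (x, y, z) \<or> escaping (rev3 (x, y, z))"
proof (rule ccontr)
  assume "\<not> ?thesis"
  then have fwd: "(x * y)^2 < x * y * z" and bwd: "(z * y)^2 < x * y * z"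
    using assms by (auto simp: escaping_def rev3_def mult.commute mult.left_commute)
  have s_le: "x * y * z \<le> \<bar>x * y\<bar> * \<bar>z\<bar>" "x * y * z \<le> \<bar>z * y\<bar> * \<bar>x\<bar>"
    by (metis abs_ge_self abs_mult mult.commute mult.left_commute)+
  have pos: "0 < \<bar>x * y\<bar>" "0 < \<bar>z * y\<bar>" using assms by (auto simp: abs_mult)
  have "\<bar>x * y\<bar> * \<bar>x * y\<bar> < \<bar>x * y\<bar> * \<bar>z\<bar>"
    using fwd s_le(1) by (simp add: power2_eq_square abs_mult_self_eq mult.commute)
  then have "\<bar>x\<bar> * \<bar>y\<bar> < \<bar>z\<bar>" using mult_less_cancel_left_pos[OF pos(1)] by (simp add: abs_mult)
  moreover have "\<bar>z * y\<bar> * \<bar>z * y\<bar> < \<bar>z * y\<bar> * \<bar>x\<bar>"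
    using bwd s_le(2) by (simp add: power2_eq_square abs_mult_self_eq mult.commute)
  then have "\<bar>z\<bar> * \<bar>y\<bar> < \<bar>x\<bar>" using mult_less_cancel_left_pos[OF pos(2)] by (simp add: abs_mult)
  ultimately show False
    using assms mult_left_mono[of 1 "\<bar>y\<bar>" "\<bar>x\<bar>"] mult_left_mono[of 1 "\<bar>y\<bar>" "\<bar>z\<bar>"] by linarith
qed

text \<open>A bounded two-sided orbit of p bounds the first coordinates along the
  forward orbits of both p and its reversal (the latter being the reversed
  backward orbit of p).\<close>

lemma bounded_orbit_fst:
  assumes "bounded (range (\<lambda>n::int. fiter n p))"
  shows "bounded (range (\<lambda>n. fst ((fmap ^^ n) p)))"
    and "bounded (range (\<lambda>n. fst ((fmap ^^ n) (rev3 p))))"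
proof -
  have lin: "bounded_linear (\<lambda>q::pt. fst q)" "bounded_linear (\<lambda>q::pt. snd (snd q))"
    by (simp_all add: bounded_linear_fst bounded_linear_compose[OF bounded_linear_snd bounded_linear_snd])
  have "range (\<lambda>n. fst ((fmap ^^ n) p)) \<subseteq> fst ` range (\<lambda>n::int. fiter n p)"
  proof
    fix a assume "a \<in> range (\<lambda>n. fst ((fmap ^^ n) p))"
    then obtain n where "a = fst (fiter (int n) p)" by (auto simp: fiter_def)
    then show "a \<in> fst ` range (\<lambda>n::int. fiter n p)" by blast
  qed
  then show "bounded (range (\<lambda>n. fst ((fmap ^^ n) p)))"
    using bounded_linear_image[OF assms lin(1)] bounded_subset by blast
  have "range (\<lambda>n. fst ((fmap ^^ n) (rev3 p)))
      \<subseteq> (\<lambda>q. snd (snd q)) ` range (\<lambda>n::int. fiter n p)"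
  proof
    fix a assume "a \<in> range (\<lambda>n. fst ((fmap ^^ n) (rev3 p)))"
    then obtain n where "a = fst ((fmap ^^ n) (rev3 p))" by blast
    moreover have "fst q = snd (snd (rev3 q))" for q by (cases q) (simp add: rev3_def)
    ultimately have "a = snd (snd (fiter (- int n) p))" by (simp add: fiter_neg)
    then show "a \<in> (\<lambda>q. snd (snd q)) ` range (\<lambda>n::int. fiter n p)" by blast
  qed
  then show "bounded (range (\<lambda>n. fst ((fmap ^^ n) (rev3 p))))"
    using bounded_linear_image[OF assms lin(2)] bounded_subset by blast
qed

theorem lemma5p18:
  fixes V x1 x2 x3 :: real
  assumes "V > 0" and "(x1, x2, x3) \<in> Omega V"
  shows "\<bar>x1\<bar> < 1 \<or> \<bar>x2\<bar> < 1 \<or> \<bar>x3\<bar> < 1"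
proof (rule ccontr)
  define p where "p = (x1, x2, x3)"
  assume "\<not> ?thesis"
  then have "escaping p \<or> escaping (rev3 p)"
    using escaping_or_rev3[of x1 x2 x3] by (simp add: p_def)
  moreover have "Iinv p > 0" and "Iinv (rev3 p) > 0"
    using assms by (simp_all add: Iinv_rev3 p_def Omega_def S_level_def)
  moreover have "bounded (range (\<lambda>n::int. fiter n p))"
    using assms(2) by (simp add: p_def Omega_def)
  ultimately show False
    using escaping_unbounded bounded_orbit_fst by blast
qed

end
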